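(* Let $k\ge 1$ be an integer and let $\Gamma=\mathbb{Z}_2\,\mathrm{wr}\,\mathbb{Z}^k$ be the restricted wreath product. Then $\Gamma$ has the property $R_\infty$: for every automorphism $\phi:\Gamma\to\Gamma$ the Reidemeister number $R(\phi)$ is infinite.
   Context: For an automorphism $\phi$ of a group $G$, the Reidemeister (twisted conjugacy) classes are the equivalence classes of the relation $g\sim hg\phi(h^{-1})$, $h,g\in G$; $R(\phi)$ denotes the number of these classes. A group has property $R_\infty$ if $R(\phi)=\infty$ for every automorphism $\phi$. The restricted wreath product $\mathbb{Z}_p\,\mathrm{wr}\,\mathbb{Z}^k$ is the semidirect product $\left(\bigoplus_{x\in\mathbb{Z}^k}(\mathbb{Z}_p)_{(x)}\right)\rtimes_\alpha\mathbb{Z}^k$, where each $(\mathbb{Z}_p)_{(x)}\cong\mathbb{Z}_p$ is generated by an element $\delta_x$, the direct sum consists of finitely supported elements, and $\alpha(y)(\delta_x)=\delta_{y+x}$ for $y\in\mathbb{Z}^k$. *)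

theory Defs
  imports "HOL-Algebra.Group"
begin

text \<open>The free abelian group Z^k, realised as integer vectors nat => int vanishing from index k on.\<close>
definition Zk :: "nat \<Rightarrow> (nat \<Rightarrow> int) set" where
  "Zk k = {y. \<forall>i\<ge>k. y i = 0}"

text \<open>Finitely supported functions Z^k -> Z_2 (Z_2 encoded as bool with xor), i.e. the
  direct sum of copies of Z_2 indexed by Z^k; delta_x is the indicator of x.\<close>
definition fin_supp_Z2 :: "nat \<Rightarrow> ((nat \<Rightarrow> int) \<Rightarrow> bool) set" where
  "fin_supp_Z2 k = {f. finite {x. f x} \<and> {x. f x} \<subseteq> Zk k}"

text \<open>Shift action alpha(y): alpha(y)(delta_x) = delta_(y+x), so (alpha(y) f)(x) = f(x - y).\<close>
definition shift_act :: "(nat \<Rightarrow> int) \<Rightarrow> ((nat \<Rightarrow> int) \<Rightarrow> bool) \<Rightarrow> ((nat \<Rightarrow> int) \<Rightarrow> bool)" where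
  "shift_act y f = (\<lambda>x. f (\<lambda>i. x i - y i))"

text \<open>The restricted wreath product Z_2 wr Z^k as the semidirect product
  (direct sum) \<rtimes>_alpha Z^k:  (f,y)(g,z) = (f + alpha(y) g, y + z).\<close>
definition Z2_wr_Zk :: "nat \<Rightarrow> (((nat \<Rightarrow> int) \<Rightarrow> bool) \<times> (nat \<Rightarrow> int)) monoid" where
  "Z2_wr_Zk k = \<lparr> carrier = fin_supp_Z2 k \<times> Zk k,
     mult = (\<lambda>(f, y) (g, z). ((\<lambda>x. f x \<noteq> shift_act y g x), (\<lambda>i. y i + z i))),
     one = ((\<lambda>_. False), (\<lambda>_. 0)) \<rparr>"

definition twisted_conj :: "('a, 'b) monoid_scheme \<Rightarrow> ('a \<Rightarrow> 'a) \<Rightarrow> ('a \<times> 'a) set" where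
  "twisted_conj G \<phi> = {(g, g'). g \<in> carrier G \<and> g' \<in> carrier G \<and>
      (\<exists>h\<in>carrier G. g' = h \<otimes>\<^bsub>G\<^esub> g \<otimes>\<^bsub>G\<^esub> \<phi> (inv\<^bsub>G\<^esub> h))}"

definition reidemeister_classes :: "('a, 'b) monoid_scheme \<Rightarrow> ('a \<Rightarrow> 'a) \<Rightarrow> 'a set set" where
  "reidemeister_classes G \<phi> = carrier G // twisted_conj G \<phi>"

definition R_infinity :: "('a, 'b) monoid_scheme \<Rightarrow> bool" where
  "R_infinity G \<longleftrightarrow> (\<forall>\<phi>\<in>iso G G. infinite (reidemeister_classes G \<phi>))"

end

theory Submission
  imports Defs "HOL-Library.Function_Algebras" "HOL-Library.Fun_Lexorder"
    "HOL-Computational_Algebra.Primes"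
begin

text \<open>
  An automorphism \<open>\<phi>\<close> of \<open>Z\<^sub>2 wr Z\<^sup>k\<close> preserves the base (the elements of order at most
  two) and induces an automorphism \<open>lin\<close> of \<open>Z\<^sup>k\<close>. Writing \<open>\<delta>\<^sub>0\<close> as the image of some
  \<open>1\<^sub>V\<close>, a parity-convolution argument with the lexicographic order shows that \<open>\<phi>\<close> maps
  \<open>\<delta>\<^sub>0\<close> to a point mass, hence moves supports in the base by the affine bijection
  \<open>x \<mapsto> lin x + c\<close>.

  If \<open>lin\<close> fixes a nonzero vector, Reidemeister classes project onto the cosets of
  \<open>(1 - lin) Z\<^sup>k\<close>, of which there are infinitely many: modulo a large prime \<open>p\<close> there
  are at least \<open>p\<close>. Otherwise twisted conjugation inside the base preserves the parity of
  the support on every orbit of \<open>x \<mapsto> lin x + c\<close>, so distinct orbits give distinct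
  classes; and there are infinitely many orbits: for \<open>k = 1\<close> the map is an involution,
  and for \<open>k \<ge> 2\<close> its period modulo \<open>N = 2\<^sup>j\<close> grows only linearly in \<open>N\<close>, while
  there are \<open>N\<^sup>k\<close> residues.
\<close>

section \<open>The group \<open>Z\<^sub>2 wr Z\<^sup>k\<close>\<close>

lemma mem_Zk_iff: "y \<in> Zk k \<longleftrightarrow> (\<forall>i\<ge>k. y i = 0)"
  by (simp add: Zk_def)

lemma Zk_zero [simp]: "0 \<in> Zk k"
  and Zk_add [simp]: "x \<in> Zk k \<Longrightarrow> y \<in> Zk k \<Longrightarrow> x + y \<in> Zk k"
  and Zk_diff [simp]: "x \<in> Zk k \<Longrightarrow> y \<in> Zk k \<Longrightarrow> x - y \<in> Zk k"
  and Zk_uminus [simp]: "x \<in> Zk k \<Longrightarrow> - x \<in> Zk k"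
  by (simp_all add: mem_Zk_iff)

lemma mem_fin_supp_Z2_iff: "f \<in> fin_supp_Z2 k \<longleftrightarrow> finite {x. f x} \<and> {x. f x} \<subseteq> Zk k"
  by (simp add: fin_supp_Z2_def)

lemma fin_supp_Z2_indicator: "finite V \<Longrightarrow> V \<subseteq> Zk k \<Longrightarrow> (\<lambda>x. x \<in> V) \<in> fin_supp_Z2 k"
  by (simp add: mem_fin_supp_Z2_iff)

lemma fin_supp_Z2_delta [simp]: "y \<in> Zk k \<Longrightarrow> (\<lambda>x. x = y) \<in> fin_supp_Z2 k"
  by (simp add: mem_fin_supp_Z2_iff)

lemma fin_supp_Z2_zero [simp]: "(\<lambda>_. False) \<in> fin_supp_Z2 k"
  by (simp add: mem_fin_supp_Z2_iff)

lemma fin_supp_Z2_xor_shift: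
  assumes "f \<in> fin_supp_Z2 k" "g \<in> fin_supp_Z2 k" "y \<in> Zk k"
  shows "(\<lambda>x. f x \<noteq> g (x - y)) \<in> fin_supp_Z2 k"
proof -
  have "{x. f x \<noteq> g (x - y)} \<subseteq> {x. f x} \<union> (\<lambda>x. x + y) ` {x. g x}"
    by (auto simp: image_iff) (metis diff_add_cancel)
  moreover have "(\<lambda>x. x + y) ` {x. g x} \<subseteq> Zk k"
    using assms by (auto simp: mem_fin_supp_Z2_iff)
  ultimately show ?thesis
    using assms by (simp add: mem_fin_supp_Z2_iff)
      (meson finite_Un finite_imageI finite_subset order_trans le_sup_iff)
qed

lemma fin_supp_Z2_xor:
  "f \<in> fin_supp_Z2 k \<Longrightarrow> g \<in> fin_supp_Z2 k \<Longrightarrow> (\<lambda>x. f x \<noteq> g x) \<in> fin_supp_Z2 k"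
  using fin_supp_Z2_xor_shift[of f k g 0] by simp

lemma fin_supp_Z2_shift:
  assumes "f \<in> fin_supp_Z2 k" "y \<in> Zk k"
  shows "(\<lambda>x. f (x + y)) \<in> fin_supp_Z2 k"
proof -
  have "{x. f (x + y)} = (\<lambda>x. x - y) ` {x. f x}"
    by (auto simp: image_iff intro!: exI[of _ "_ + y"])
  then show ?thesis
    using assms by (auto simp: mem_fin_supp_Z2_iff)
qed

lemma Z2_wr_Zk_carrier: "carrier (Z2_wr_Zk k) = fin_supp_Z2 k \<times> Zk k"
  by (simp add: Z2_wr_Zk_def)

lemma Z2_wr_Zk_mult:
  "(f, y) \<otimes>\<^bsub>Z2_wr_Zk k\<^esub> (g, z) = ((\<lambda>x. f x \<noteq> g (x - y)), y + z)"
  by (simp add: Z2_wr_Zk_def shift_act_def fun_diff_def plus_fun_def)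

lemma Z2_wr_Zk_one: "\<one>\<^bsub>Z2_wr_Zk k\<^esub> = ((\<lambda>_. False), 0)"
  by (simp add: Z2_wr_Zk_def zero_fun_def)

lemma group_Z2_wr_Zk: "group (Z2_wr_Zk k)"
proof (rule groupI)
  fix x y
  assume "x \<in> carrier (Z2_wr_Zk k)" "y \<in> carrier (Z2_wr_Zk k)"
  then show "x \<otimes>\<^bsub>Z2_wr_Zk k\<^esub> y \<in> carrier (Z2_wr_Zk k)"
    using fin_supp_Z2_xor_shift[of "fst x" k "fst y" "snd x"]
    by (cases x, cases y) (auto simp: Z2_wr_Zk_carrier Z2_wr_Zk_mult)
next
  fix x y z
  show "x \<otimes>\<^bsub>Z2_wr_Zk k\<^esub> y \<otimes>\<^bsub>Z2_wr_Zk k\<^esub> z = x \<otimes>\<^bsub>Z2_wr_Zk k\<^esub> (y \<otimes>\<^bsub>Z2_wr_Zk k\<^esub> z)"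
    by (cases x, cases y, cases z) (auto simp: Z2_wr_Zk_mult fun_eq_iff algebra_simps)
next
  fix x
  assume x: "x \<in> carrier (Z2_wr_Zk k)"
  obtain f y where xe: "x = (f, y)"
    by (cases x)
  have "((\<lambda>z. f (z + y)), - y) \<in> carrier (Z2_wr_Zk k)"
    using x xe by (auto simp: Z2_wr_Zk_carrier intro: fin_supp_Z2_shift)
  moreover have "((\<lambda>z. f (z + y)), - y) \<otimes>\<^bsub>Z2_wr_Zk k\<^esub> x = \<one>\<^bsub>Z2_wr_Zk k\<^esub>"
    by (simp add: xe Z2_wr_Zk_mult Z2_wr_Zk_one fun_eq_iff)
  ultimately show "\<exists>y\<in>carrier (Z2_wr_Zk k). y \<otimes>\<^bsub>Z2_wr_Zk k\<^esub> x = \<one>\<^bsub>Z2_wr_Zk k\<^esub>"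
    by blast
qed (auto simp: Z2_wr_Zk_one Z2_wr_Zk_carrier Z2_wr_Zk_mult)

lemma Z2_wr_Zk_inv:
  assumes "(f, y) \<in> carrier (Z2_wr_Zk k)"
  shows "inv\<^bsub>Z2_wr_Zk k\<^esub> (f, y) = ((\<lambda>z. f (z + y)), - y)"
proof (rule group.inv_equality[OF group_Z2_wr_Zk _ assms])
  show "((\<lambda>z. f (z + y)), - y) \<otimes>\<^bsub>Z2_wr_Zk k\<^esub> (f, y) = \<one>\<^bsub>Z2_wr_Zk k\<^esub>"
    by (simp add: Z2_wr_Zk_mult Z2_wr_Zk_one fun_eq_iff)
  show "((\<lambda>z. f (z + y)), - y) \<in> carrier (Z2_wr_Zk k)"
    using assms by (auto simp: Z2_wr_Zk_carrier intro: fin_supp_Z2_shift)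
qed

lemma Z2_wr_Zk_square_eq_one_iff:
  "g \<otimes>\<^bsub>Z2_wr_Zk k\<^esub> g = \<one>\<^bsub>Z2_wr_Zk k\<^esub> \<longleftrightarrow> snd g = 0"
proof (cases g)
  case (Pair f y)
  have "y + y = 0 \<longleftrightarrow> y = 0"
    by (auto simp: fun_eq_iff)
  then show ?thesis
    by (cases "y = 0") (simp_all add: Pair Z2_wr_Zk_mult Z2_wr_Zk_one)
qed

lemma (in group) twisted_conjI:
  assumes "\<phi> \<in> hom G G" "g \<in> carrier G" "h \<in> carrier G"
  shows "(g, h \<otimes> g \<otimes> \<phi> (inv h)) \<in> twisted_conj G \<phi>"
  using assms by (auto simp: twisted_conj_def hom_in_carrier)

lemma (in group) twisted_conj_equiv:
  assumes \<phi>: "\<phi> \<in> hom G G"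
  shows "equiv (carrier G) (twisted_conj G \<phi>)"
proof (rule equivI)
  have hom: "group_hom G G \<phi>"
    using assms by (simp add: group_hom_def group_hom_axioms_def group_axioms)
  note hom_simps [simp] = group_hom.hom_inv[OF hom] group_hom.hom_one[OF hom]
    hom_mult[OF \<phi>] hom_in_carrier[OF \<phi>]
  show "twisted_conj G \<phi> \<subseteq> carrier G \<times> carrier G"
    by (auto simp: twisted_conj_def)
  show "refl_on (carrier G) (twisted_conj G \<phi>)"
    using twisted_conjI[OF \<phi> _ one_closed] by (intro refl_onI) simp
  show "sym (twisted_conj G \<phi>)"
  proof (rule symI)
    fix a b
    assume "(a, b) \<in> twisted_conj G \<phi>"
    then obtain u where a: "a \<in> carrier G" and b: "b \<in> carrier G" and u: "u \<in> carrier G"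
      and e: "b = u \<otimes> a \<otimes> \<phi> (inv u)"
      unfolding twisted_conj_def by blast
    have "inv u \<otimes> b \<otimes> \<phi> (inv (inv u)) = (inv u \<otimes> u) \<otimes> a \<otimes> (inv (\<phi> u) \<otimes> \<phi> u)"
      using a u by (simp add: e m_assoc) (simp add: m_assoc[symmetric])
    also have "\<dots> = a"
      using a u by simp
    finally show "(b, a) \<in> twisted_conj G \<phi>"
      using twisted_conjI[OF \<phi> b inv_closed[OF u]] by metis
  qed
  show "trans (twisted_conj G \<phi>)"
  proof (rule transI)
    fix a b c
    assume "(a, b) \<in> twisted_conj G \<phi>" "(b, c) \<in> twisted_conj G \<phi>"
    then obtain u v where a: "a \<in> carrier G" and u: "u \<in> carrier G" and v: "v \<in> carrier G"
      and e: "b = u \<otimes> a \<otimes> \<phi> (inv u)" "c = v \<otimes> b \<otimes> \<phi> (inv v)"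
      unfolding twisted_conj_def by blast
    have "c = (v \<otimes> u) \<otimes> a \<otimes> (inv (\<phi> u) \<otimes> inv (\<phi> v))"
      using a u v by (simp add: e m_assoc)
    also have "\<dots> = (v \<otimes> u) \<otimes> a \<otimes> \<phi> (inv (v \<otimes> u))"
      using u v by (simp add: inv_mult_group)
    finally show "(a, c) \<in> twisted_conj G \<phi>"
      using twisted_conjI[OF \<phi> a m_closed[OF v u]] by metis
  qed
qed

lemma card_image_le_card_quotient:
  assumes eq: "equiv A r" and inv: "\<And>a b. (a, b) \<in> r \<Longrightarrow> F a = F b"
    and fin: "finite (A // r)"
  shows "finite (F ` A)" "card (F ` A) \<le> card (A // r)"
proof -
  have "F ` r``{a} = {F a}" if "a \<in> A" for a
  proof
    show "F ` r``{a} \<subseteq> {F a}"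
      by (auto dest: inv)
    show "{F a} \<subseteq> F ` r``{a}"
      using equiv_class_self[OF eq that] by blast
  qed
  then have "F ` A = (\<lambda>X. the_elem (F ` X)) ` (A // r)"
    unfolding quotient_def by (auto simp: image_UN)
  then show "finite (F ` A)" "card (F ` A) \<le> card (A // r)"
    using fin card_image_le by auto
qed

lemma some_in_class: "equiv A r \<Longrightarrow> X \<in> A // r \<Longrightarrow> (SOME x. x \<in> X) \<in> X"
  by (metis equiv_class_self quotientE someI)

section \<open>Sets whose parity convolution is a point mass\<close>

text \<open>Over \<open>Z\<^sub>2\<close> the convolution of the indicators of \<open>U\<close> and \<open>W\<close> is
  \<open>x \<mapsto> card {w\<in>W. x - w \<in> U} mod 2\<close>.\<close>

lemma less_fun_add_right: "less_fun x y \<Longrightarrow> less_fun (x + z) (y + (z :: nat \<Rightarrow> int))"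
  by (auto simp: less_fun_def)

lemma less_fun_total_on_Zk:
  assumes "x \<in> Zk k" "y \<in> Zk k" "x \<noteq> y"
  shows "less_fun x y \<or> less_fun y x"
proof -
  have "{i. x i \<noteq> y i} \<subseteq> {..<k}"
    using assms by (auto simp: mem_Zk_iff)
  then show ?thesis
    using less_fun_trichotomy[of x y] assms(3) finite_subset by blast
qed

lemma finite_has_greatest_wrt:
  assumes "finite S" "S \<noteq> {}"
    and total: "\<And>x y. x \<in> S \<Longrightarrow> y \<in> S \<Longrightarrow> x \<noteq> y \<Longrightarrow> lt x y \<or> lt y x"
    and trans: "\<And>x y z. lt x y \<Longrightarrow> lt y z \<Longrightarrow> lt x z"
  shows "\<exists>a\<in>S. \<forall>s\<in>S. s \<noteq> a \<longrightarrow> lt s a"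
  using assms(1,2) total
proof (induction S rule: finite_ne_induct)
  case (insert x F)
  then obtain a where a: "a \<in> F" "\<forall>s\<in>F. s \<noteq> a \<longrightarrow> lt s a"
    by blast
  then have "lt x a \<or> lt a x"
    using insert by (metis insertCI)
  then show ?case
    using a trans by (metis insert_iff)
qed simp

lemma parity_convolution_greatest_sum:
  fixes lt :: "'a::ab_group_add \<Rightarrow> 'a \<Rightarrow> bool"
  assumes shift: "\<And>x y z. lt x y \<Longrightarrow> lt (x + z) (y + z)"
    and asym: "\<And>x y. lt x y \<Longrightarrow> \<not> lt y x"
    and unit: "\<And>x. odd (card {w\<in>W. x - w \<in> U}) \<longleftrightarrow> x = 0"
    and a: "a \<in> U" "\<forall>s\<in>U. s \<noteq> a \<longrightarrow> lt s a"
    and b: "b \<in> W" "\<forall>s\<in>W. s \<noteq> b \<longrightarrow> lt s b"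
  shows "a + b = 0"
proof -
  have "w = b" if "w \<in> W" "a + b - w \<in> U" for w
  proof (rule ccontr)
    assume "w \<noteq> b"
    then have "lt (w + (a - w)) (b + (a - w))"
      using b that shift by blast
    then have "lt a (a + b - w)"
      by (simp add: algebra_simps)
    moreover have "lt (a + b - w) a"
      using a that \<open>w \<noteq> b\<close> by auto
    ultimately show False
      using asym by blast
  qed
  then have "{w\<in>W. a + b - w \<in> U} = {b}"
    using a b by auto
  then show ?thesis
    using unit[of "a + b"] by simp
qed

lemma finite_Zk_has_lex_greatest_least:
  assumes "finite S" "S \<noteq> {}" "S \<subseteq> Zk k"
  shows "\<exists>a\<in>S. \<forall>s\<in>S. s \<noteq> a \<longrightarrow> less_fun s a" "\<exists>a\<in>S. \<forall>s\<in>S. s \<noteq> a \<longrightarrow> less_fun a s"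
proof -
  have total: "less_fun x y \<or> less_fun y x" if "x \<in> S" "y \<in> S" "x \<noteq> y" for x y
    using that assms(3) less_fun_total_on_Zk by blast
  show "\<exists>a\<in>S. \<forall>s\<in>S. s \<noteq> a \<longrightarrow> less_fun s a"
    by (rule finite_has_greatest_wrt[OF assms(1,2)]) (use total less_fun_trans in auto)
  show "\<exists>a\<in>S. \<forall>s\<in>S. s \<noteq> a \<longrightarrow> less_fun a s"
    by (rule finite_has_greatest_wrt[OF assms(1,2), of "\<lambda>x y. less_fun y x"])
      (use total less_fun_trans in auto)
qed

text \<open>Both the lexicographically greatest and the least elements of \<open>U\<close> and \<open>W\<close> must sum to
  zero, which leaves no room for a second element of \<open>U\<close>.\<close>

lemma parity_convolution_unit_singleton:
  fixes U W :: "(nat \<Rightarrow> int) set"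
  assumes fin: "finite U" "finite W" and sub: "U \<subseteq> Zk k" "W \<subseteq> Zk k"
    and unit: "\<And>x. odd (card {w\<in>W. x - w \<in> U}) \<longleftrightarrow> x = 0"
  shows "\<exists>c. U = {c}"
proof -
  have ne: "U \<noteq> {}" "W \<noteq> {}"
    using unit[of 0] by auto
  obtain a1 b1 a2 b2 where
    a1: "a1 \<in> U" "\<forall>s\<in>U. s \<noteq> a1 \<longrightarrow> less_fun s a1" and
    b1: "b1 \<in> W" "\<forall>s\<in>W. s \<noteq> b1 \<longrightarrow> less_fun s b1" and
    a2: "a2 \<in> U" "\<forall>s\<in>U. s \<noteq> a2 \<longrightarrow> less_fun a2 s" and
    b2: "b2 \<in> W" "\<forall>s\<in>W. s \<noteq> b2 \<longrightarrow> less_fun b2 s"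
    using finite_Zk_has_lex_greatest_least[OF fin(1) ne(1) sub(1)]
      finite_Zk_has_lex_greatest_least[OF fin(2) ne(2) sub(2)] by blast
  have sum1: "a1 + b1 = 0"
    by (rule parity_convolution_greatest_sum[OF _ _ unit a1 b1])
      (use less_fun_add_right less_fun_asym in blast)+
  have sum2: "a2 + b2 = 0"
    by (rule parity_convolution_greatest_sum[of "\<lambda>x y. less_fun y x", OF _ _ unit a2 b2])
      (use less_fun_add_right less_fun_asym in blast)+
  have "a1 = a2"
  proof (rule ccontr)
    assume "a1 \<noteq> a2"
    then have "less_fun (a2 + (b1 - a2)) (a1 + (b1 - a2))"
      using a1 a2 less_fun_add_right by blast
    moreover have "a1 + (b1 - a2) = b2"
      using sum1 sum2 by (simp add: algebra_simps eq_neg_iff_add_eq_0[symmetric])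
    ultimately have "less_fun b1 b2"
      by simp
    then show False
      using b1 b2 less_fun_asym less_fun_irrefl by metis
  qed
  then have "U = {a1}"
    using a1 a2 less_fun_asym by blast
  then show ?thesis
    by blast
qed

lemma even_card_xor_inter:
  assumes "finite {x. f x}" "finite {x. g x}"
  shows "even (card ({x. f x \<noteq> g x} \<inter> X) + card ({x. f x} \<inter> X) + card ({x. g x} \<inter> X))"
proof -
  define P where "P = {x. f x} \<inter> X"
  define Q where "Q = {x. g x} \<inter> X"
  have fin: "finite P" "finite Q"
    using assms by (auto simp: P_def Q_def)
  have "{x. f x \<noteq> g x} \<inter> X = (P \<union> Q) - (P \<inter> Q)"
    by (auto simp: P_def Q_def)
  moreover have "card ((P \<union> Q) - (P \<inter> Q)) = card (P \<union> Q) - card (P \<inter> Q)"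
    using fin by (intro card_Diff_subset) auto
  ultimately have "card ({x. f x \<noteq> g x} \<inter> X) = card (P \<union> Q) - card (P \<inter> Q)"
    by simp
  moreover have "card P + card Q = card (P \<union> Q) + card (P \<inter> Q)"
    using card_Un_Int[OF fin] .
  moreover have "card (P \<inter> Q) \<le> card (P \<union> Q)"
    using fin by (intro card_mono) auto
  ultimately have "card ({x. f x \<noteq> g x} \<inter> X) + card ({x. f x} \<inter> X) + card ({x. g x} \<inter> X)
      = 2 * card (P \<union> Q)"
    by (simp add: P_def Q_def)
  then show ?thesis
    by simp
qed

section \<open>Residues of lattice points and affine maps of \<open>Z\<^sup>k\<close>\<close>

definition smul :: "int \<Rightarrow> (nat \<Rightarrow> int) \<Rightarrow> (nat \<Rightarrow> int)" where
  "smul n x = (\<lambda>i. n * x i)"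

definition vmod :: "int \<Rightarrow> (nat \<Rightarrow> int) \<Rightarrow> (nat \<Rightarrow> int)" where
  "vmod p x = (\<lambda>i. x i mod p)"

lemma Zk_smul [simp]: "x \<in> Zk k \<Longrightarrow> smul n x \<in> Zk k"
  by (simp add: mem_Zk_iff smul_def)

lemma Zk_vmod [simp]: "x \<in> Zk k \<Longrightarrow> vmod p x \<in> Zk k"
  by (simp add: mem_Zk_iff vmod_def)

lemma vmod_vmod [simp]: "vmod p (vmod p x) = vmod p x"
  by (simp add: vmod_def)

lemma vmod_eq_iff: "vmod p x = vmod p y \<longleftrightarrow> (\<forall>i. p dvd x i - y i)"
  by (simp add: vmod_def fun_eq_iff mod_eq_dvd_iff)

lemma vmod_add_vmod_right: "vmod p (x + vmod p y) = vmod p (x + y)"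
  by (simp add: vmod_def fun_eq_iff mod_add_right_eq)

lemma vmod_eq_imp_eq_add_smul:
  assumes "vmod p x = vmod p y" "x \<in> Zk k" "y \<in> Zk k"
  shows "\<exists>d\<in>Zk k. x = y + smul p d"
proof -
  define d where "d = (\<lambda>i. (x i - y i) div p)"
  have "x = y + smul p d"
    using assms(1) unfolding vmod_eq_iff by (simp add: fun_eq_iff smul_def d_def)
  moreover have "d \<in> Zk k"
    using assms(2,3) by (simp add: mem_Zk_iff d_def)
  ultimately show ?thesis
    by blast
qed

lemma vmod_Zk_eq_image_PiE:
  assumes "N > 0"
  shows "vmod (int N) ` Zk k = (\<lambda>f i. if i < k then int (f i) else 0) ` (\<Pi>\<^sub>E i\<in>{..<k}. {..<N})"
proof (intro equalityI subsetI)
  fix z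
  assume "z \<in> vmod (int N) ` Zk k"
  then obtain y where y: "y \<in> Zk k" "z = vmod (int N) y"
    by blast
  then have "z = (\<lambda>i. if i < k then int (restrict (\<lambda>i. nat (z i)) {..<k} i) else 0)"
    using assms by (auto simp: fun_eq_iff vmod_def mem_Zk_iff)
  moreover have "restrict (\<lambda>i. nat (z i)) {..<k} \<in> (\<Pi>\<^sub>E i\<in>{..<k}. {..<N})"
    using assms y by (auto simp: vmod_def nat_less_iff)
  ultimately show "z \<in> (\<lambda>f i. if i < k then int (f i) else 0) ` (\<Pi>\<^sub>E i\<in>{..<k}. {..<N})"
    by blast
next
  fix z
  assume "z \<in> (\<lambda>f i. if i < k then int (f i) else 0) ` (\<Pi>\<^sub>E i\<in>{..<k}. {..<N})"
  then obtain f where f: "f \<in> (\<Pi>\<^sub>E i\<in>{..<k}. {..<N})" "z = (\<lambda>i. if i < k then int (f i) else 0)"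
    by blast
  then have "z \<in> Zk k" "vmod (int N) z = z"
    by (auto simp: mem_Zk_iff vmod_def fun_eq_iff PiE_iff)
  then show "z \<in> vmod (int N) ` Zk k"
    by (metis image_eqI)
qed

lemma card_vmod_Zk:
  assumes "N > 0"
  shows "finite (vmod (int N) ` Zk k)" "card (vmod (int N) ` Zk k) = N ^ k"
proof -
  have "inj_on (\<lambda>f i. if i < k then int (f i) else 0) (\<Pi>\<^sub>E i\<in>{..<k}. {..<N})"
  proof (rule inj_onI)
    fix f g
    assume f: "f \<in> (\<Pi>\<^sub>E i\<in>{..<k}. {..<N})" and g: "g \<in> (\<Pi>\<^sub>E i\<in>{..<k}. {..<N})"
      and eq: "(\<lambda>i. if i < k then int (f i) else 0) = (\<lambda>i. if i < k then int (g i) else 0)"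
    show "f = g"
    proof (rule PiE_ext[OF f g])
      fix i
      assume "i \<in> {..<k}"
      then show "f i = g i"
        using fun_cong[OF eq, of i] by simp
    qed
  qed
  then show "finite (vmod (int N) ` Zk k)" "card (vmod (int N) ` Zk k) = N ^ k"
    by (simp_all add: vmod_Zk_eq_image_PiE[OF assms] card_image card_PiE finite_PiE)
qed

definition affine_Zk :: "nat \<Rightarrow> ((nat \<Rightarrow> int) \<Rightarrow> (nat \<Rightarrow> int)) \<Rightarrow> bool" where
  "affine_Zk k S \<longleftrightarrow>
     (\<forall>x\<in>Zk k. S x \<in> Zk k) \<and> (\<forall>x\<in>Zk k. \<forall>y\<in>Zk k. S (x + y) = S x + S y - S 0)"

lemma affine_Zk_closed: "affine_Zk k S \<Longrightarrow> x \<in> Zk k \<Longrightarrow> S x \<in> Zk k"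
  by (simp add: affine_Zk_def)

lemma affine_Zk_add:
  "affine_Zk k S \<Longrightarrow> x \<in> Zk k \<Longrightarrow> y \<in> Zk k \<Longrightarrow> S (x + y) = S x + S y - S 0"
  by (simp add: affine_Zk_def)

lemma affine_Zk_diff:
  assumes "affine_Zk k S" "x \<in> Zk k" "y \<in> Zk k"
  shows "S (x - y) = S x - S y + S 0"
  using affine_Zk_add[OF assms(1), of "x - y" y] assms(2,3) by (simp add: algebra_simps)

lemma smul_add_left: "smul (a + b) v = smul a v + smul b v"
  and smul_1 [simp]: "smul 1 v = v"
  and smul_zero_right [simp]: "smul n 0 = 0"
  by (simp_all add: smul_def fun_eq_iff algebra_simps)

lemma affine_Zk_smul:
  assumes S: "affine_Zk k S" and d: "d \<in> Zk k"
  shows "S (smul n d) = S 0 + smul n (S d - S 0)"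
proof -
  have nat_case: "S (smul (int m) d) = S 0 + smul (int m) (S d - S 0)" for m
  proof (induction m)
    case (Suc m)
    have "smul (int (Suc m)) d = smul (int m) d + d"
      by (simp add: smul_add_left)
    then have "S (smul (int (Suc m)) d) = S (smul (int m) d) + S d - S 0"
      using affine_Zk_add[OF S, of "smul (int m) d" d] d by simp
    also have "\<dots> = S 0 + smul (int (Suc m)) (S d - S 0)"
      unfolding Suc.IH by (simp add: smul_def fun_eq_iff algebra_simps)
    finally show ?case .
  qed (simp add: smul_def fun_eq_iff)
  show ?thesis
  proof (cases n rule: int_cases)
    case (neg m)
    define v where "v = smul (int (Suc m)) d"
    have "smul n d = 0 - v"
      by (simp add: v_def neg smul_def fun_eq_iff algebra_simps)
    then have "S (smul n d) = S (0 - v)"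
      by simp
    also have "\<dots> = S 0 - S v + S 0"
      using affine_Zk_diff[OF S, of 0 v] d by (simp add: v_def)
    also have "\<dots> = S 0 - smul (int (Suc m)) (S d - S 0)"
      unfolding v_def nat_case by (simp add: algebra_simps)
    also have "\<dots> = S 0 + smul n (S d - S 0)"
      by (simp add: neg smul_def fun_eq_iff algebra_simps)
    finally show ?thesis .
  qed (simp add: nat_case)
qed

lemma affine_Zk_vmod_cong:
  assumes S: "affine_Zk k S" and "x \<in> Zk k" "y \<in> Zk k" "vmod p x = vmod p y"
  shows "vmod p (S x) = vmod p (S y)"
proof -
  obtain d where d: "d \<in> Zk k" "x = y + smul p d"
    using vmod_eq_imp_eq_add_smul assms(2-4) by blast
  have "S x = S y + smul p (S d - S 0)"
    using affine_Zk_add[OF S, of y "smul p d"] affine_Zk_smul[OF S d(1)] d assms(3)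
    by (simp add: algebra_simps)
  then show ?thesis
    by (simp add: vmod_eq_iff smul_def)
qed

lemma affine_Zk_id: "affine_Zk k id"
  by (simp add: affine_Zk_def)

lemma affine_Zk_comp:
  assumes S: "affine_Zk k S" and R: "affine_Zk k R"
  shows "affine_Zk k (S \<circ> R)"
  unfolding affine_Zk_def
proof (intro conjI ballI)
  fix x y
  assume x: "x \<in> Zk k" and y: "y \<in> Zk k"
  then show "(S \<circ> R) x \<in> Zk k"
    using S R by (simp add: affine_Zk_closed)
  have R_in: "R x \<in> Zk k" "R y \<in> Zk k" "R 0 \<in> Zk k"
    using R x y by (auto simp: affine_Zk_closed)
  have "R (x + y) = R x + (R y - R 0)"
    using affine_Zk_add[OF R x y] by (simp add: algebra_simps)
  then have "S (R (x + y)) = S (R x + (R y - R 0))"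
    by simp
  also have "\<dots> = S (R x) + S (R y) - S (R 0)"
    using affine_Zk_add[OF S] affine_Zk_diff[OF S] R_in by simp
  finally show "(S \<circ> R) (x + y) = (S \<circ> R) x + (S \<circ> R) y - (S \<circ> R) 0"
    by simp
qed

lemma affine_Zk_funpow: "affine_Zk k S \<Longrightarrow> affine_Zk k (S ^^ n)"
  by (induction n) (auto simp: affine_Zk_id intro: affine_Zk_comp)

text \<open>If \<open>S \<equiv> id\<close> modulo an even \<open>q\<close>, say \<open>S x = x + q e\<close>, then
  \<open>S (S x) = x + 2 q e + q\<^sup>2 (\<dots>)\<close>, and \<open>q\<^sup>2\<close> is divisible by \<open>2 q\<close>.\<close>

lemma affine_Zk_twice_vmod_double:
  assumes S: "affine_Zk k S" and q: "even q"
    and id_mod: "\<forall>x\<in>Zk k. vmod q (S x) = vmod q x"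
  shows "\<forall>x\<in>Zk k. vmod (2 * q) (S (S x)) = vmod (2 * q) x"
proof
  fix x
  assume x: "x \<in> Zk k"
  define E where "E y = (\<lambda>i. (S y i - y i) div q)" for y
  have S_eq: "S y = y + smul q (E y)" if "y \<in> Zk k" for y
  proof -
    have "\<forall>i. q dvd S y i - y i"
      using id_mod that vmod_eq_iff by blast
    then show ?thesis
      by (simp add: E_def smul_def fun_eq_iff)
  qed
  have E_in: "E y \<in> Zk k" if "y \<in> Zk k" for y
    using that affine_Zk_closed[OF S that] by (simp add: mem_Zk_iff E_def)
  obtain r where r: "q = 2 * r"
    using q by blast
  define e where "e = E x"
  have e: "e \<in> Zk k"
    using E_in[OF x] by (simp add: e_def)
  have "S (S x) = S (x + smul q e)"
    using S_eq[OF x] by (simp add: e_def)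
  also have "\<dots> = S x + S (smul q e) - S 0"
    using affine_Zk_add[OF S x] e by simp
  also have "\<dots> = S x + smul q (S e - S 0)"
    using affine_Zk_smul[OF S e] by simp
  also have "\<dots> = x + smul (2 * q) (e + smul r (E e - E 0))"
    unfolding S_eq[OF x] S_eq[OF e] S_eq[OF Zk_zero]
    by (simp add: e_def smul_def fun_eq_iff r algebra_simps)
  finally show "vmod (2 * q) (S (S x)) = vmod (2 * q) x"
    by (simp add: vmod_eq_iff smul_def)
qed

section \<open>Orbits of an affine self-map of \<open>Z\<^sup>k\<close>\<close>

locale affine_onto =
  fixes k :: nat and A :: "(nat \<Rightarrow> int) \<Rightarrow> (nat \<Rightarrow> int)"
  assumes affine: "affine_Zk k A" and onto: "A ` Zk k = Zk k"
begin

lemma funpow_closed: "x \<in> Zk k \<Longrightarrow> (A ^^ n) x \<in> Zk k"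
  using affine_Zk_closed[OF affine_Zk_funpow[OF affine]] .

lemma funpow_onto: "w \<in> Zk k \<Longrightarrow> \<exists>x\<in>Zk k. (A ^^ n) x = w"
proof (induction n arbitrary: w)
  case (Suc n)
  then obtain v where v: "v \<in> Zk k" "A v = w"
    using onto by (metis imageE)
  then obtain x where "x \<in> Zk k" "(A ^^ n) x = v"
    using Suc.IH by blast
  then show ?case
    using v by auto
qed auto

lemma funpow_vmod_cong:
  "x \<in> Zk k \<Longrightarrow> y \<in> Zk k \<Longrightarrow> vmod p x = vmod p y \<Longrightarrow> vmod p ((A ^^ n) x) = vmod p ((A ^^ n) y)"
  using affine_Zk_vmod_cong[OF affine_Zk_funpow[OF affine]] .

definition orbit_rel :: "((nat \<Rightarrow> int) \<times> (nat \<Rightarrow> int)) set" where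
  "orbit_rel = {(x, y). x \<in> Zk k \<and> y \<in> Zk k \<and> (\<exists>m n. (A ^^ m) x = (A ^^ n) y)}"

lemma orbit_rel_equiv: "equiv (Zk k) orbit_rel"
proof (rule equivI)
  show "orbit_rel \<subseteq> Zk k \<times> Zk k"
    by (auto simp: orbit_rel_def)
  show "refl_on (Zk k) orbit_rel"
    by (rule refl_onI) (auto simp: orbit_rel_def)
  show "sym orbit_rel"
    by (rule symI) (auto simp: orbit_rel_def, metis)
  show "trans orbit_rel"
  proof (rule transI)
    fix x y z
    assume "(x, y) \<in> orbit_rel" "(y, z) \<in> orbit_rel"
    then obtain m n p q where Z: "x \<in> Zk k" "z \<in> Zk k"
      and xy: "(A ^^ m) x = (A ^^ n) y" and yz: "(A ^^ p) y = (A ^^ q) z"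
      by (auto simp: orbit_rel_def)
    have "(A ^^ (p + m)) x = (A ^^ p) ((A ^^ n) y)"
      by (simp add: funpow_add xy)
    also have "\<dots> = (A ^^ n) ((A ^^ p) y)"
      by (metis comp_apply funpow_add add.commute)
    also have "\<dots> = (A ^^ (n + q)) z"
      by (simp add: funpow_add yz)
    finally show "(x, z) \<in> orbit_rel"
      using Z by (auto simp: orbit_rel_def)
  qed
qed

lemma orbit_class_subset: "X \<in> Zk k // orbit_rel \<Longrightarrow> X \<subseteq> Zk k"
  using orbit_rel_equiv in_quotient_imp_subset by blast

lemma apply_in_orbit_class_iff:
  assumes X: "X \<in> Zk k // orbit_rel" and y: "y \<in> Zk k"
  shows "A y \<in> X \<longleftrightarrow> y \<in> X"
proof -
  have "(A ^^ 1) y = (A ^^ 0) (A y)"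
    by simp
  then have "(y, A y) \<in> orbit_rel"
    using y affine_Zk_closed[OF affine y] unfolding orbit_rel_def by blast
  then show ?thesis
    using in_quotient_imp_closed[OF orbit_rel_equiv X] orbit_rel_equiv
    by (meson equivE symD)
qed

definition periodic_mod :: "int \<Rightarrow> nat \<Rightarrow> bool" where
  "periodic_mod N P \<longleftrightarrow> (\<forall>x\<in>Zk k. vmod N ((A ^^ P) x) = vmod N x)"

lemma periodic_mod_mult:
  assumes "periodic_mod N P" "x \<in> Zk k"
  shows "vmod N ((A ^^ (q * P)) x) = vmod N x"
proof (induction q)
  case (Suc q)
  have "(A ^^ (Suc q * P)) x = (A ^^ P) ((A ^^ (q * P)) x)"
    by (simp add: funpow_add)
  then show ?case
    using assms funpow_closed Suc.IH by (simp add: periodic_mod_def)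
qed simp

lemma vmod_funpow_mod_period:
  assumes "periodic_mod N P" "x \<in> Zk k"
  shows "vmod N ((A ^^ j) x) = vmod N ((A ^^ (j mod P)) x)"
proof -
  have "(A ^^ j) x = (A ^^ (j mod P)) ((A ^^ (j div P * P)) x)"
    by (metis comp_apply div_mult_mod_eq funpow_add add.commute)
  then show ?thesis
    using funpow_vmod_cong[OF funpow_closed[OF assms(2)] assms(2)] periodic_mod_mult[OF assms]
    by simp
qed

lemma card_vmod_orbit_class_le:
  assumes P: "P > 0" "periodic_mod N P" and X: "X \<in> Zk k // orbit_rel"
  shows "card (vmod N ` X) \<le> P"
proof -
  obtain x0 where x0: "X = orbit_rel``{x0}" "x0 \<in> Zk k"
    using X by (auto elim: quotientE)
  have "vmod N ` X \<subseteq> (\<lambda>j. vmod N ((A ^^ j) x0)) ` {..<P}"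
  proof
    fix r
    assume "r \<in> vmod N ` X"
    then obtain z m n where z: "z \<in> Zk k" "r = vmod N z" and mn: "(A ^^ m) x0 = (A ^^ n) z"
      using x0 by (auto simp: orbit_rel_def)
    have "n \<le> n * P"
      using P by simp
    then have "(A ^^ (n * P)) z = (A ^^ (n * P - n)) ((A ^^ n) z)"
      by (metis comp_apply funpow_add le_add_diff_inverse2)
    also have "\<dots> = (A ^^ (n * P - n + m)) x0"
      by (simp add: funpow_add mn)
    finally have "r = vmod N ((A ^^ ((n * P - n + m) mod P)) x0)"
      using z periodic_mod_mult[OF P(2) z(1), of n] vmod_funpow_mod_period[OF P(2) x0(2)]
      by simp
    then show "r \<in> (\<lambda>j. vmod N ((A ^^ j) x0)) ` {..<P}"
      using P by auto
  qed
  then have "card (vmod N ` X) \<le> card ((\<lambda>j. vmod N ((A ^^ j) x0)) ` {..<P})"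
    by (intro card_mono) auto
  also have "\<dots> \<le> P"
    using card_image_le[of "{..<P}"] by simp
  finally show ?thesis .
qed

lemma card_vmod_Zk_le_orbits:
  assumes "finite (Zk k // orbit_rel)" "P > 0" "periodic_mod N P"
  shows "card (vmod N ` Zk k) \<le> card (Zk k // orbit_rel) * P"
proof -
  have "vmod N ` Zk k = (\<Union>X\<in>Zk k // orbit_rel. vmod N ` X)"
    using Union_quotient[OF orbit_rel_equiv] by blast
  then have "card (vmod N ` Zk k) \<le> (\<Sum>X\<in>Zk k // orbit_rel. card (vmod N ` X))"
    using card_UN_le[OF assms(1)] by simp
  also have "\<dots> \<le> card (Zk k // orbit_rel) * P"
    using sum_bounded_above[of _ "\<lambda>X. card (vmod N ` X)" P] card_vmod_orbit_class_le assms(2,3)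
    by simp
  finally show ?thesis .
qed

text \<open>\<open>A\<close> permutes the finitely many residue classes modulo \<open>N\<close>, so some power of it
  fixes all of them.\<close>

lemma periodic_mod_exists:
  assumes "N > 0"
  shows "\<exists>P>0. periodic_mod (int N) P"
proof -
  define H where "H = vmod (int N) ` Zk k"
  define g where "g n = restrict (\<lambda>y. vmod (int N) ((A ^^ n) y)) H" for n
  have "range g \<subseteq> (\<Pi>\<^sub>E y\<in>H. H)"
    using funpow_closed by (auto simp: g_def H_def)
  moreover have "finite (\<Pi>\<^sub>E y\<in>H. H)"
    using card_vmod_Zk[OF assms] by (simp add: H_def finite_PiE)
  ultimately have "finite (range g)"
    using finite_subset by blast
  then have "\<not> inj g"
    using finite_imageD infinite_UNIV_nat by blast
  then obtain a b where ab: "a < b" "g a = g b"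
    unfolding inj_def by (metis linorder_neqE_nat)
  have same: "vmod (int N) ((A ^^ a) y) = vmod (int N) ((A ^^ b) y)" if y: "y \<in> Zk k" for y
  proof -
    have "vmod (int N) y \<in> H" "vmod (int N) y \<in> Zk k"
      using y by (auto simp: H_def)
    then have "vmod (int N) ((A ^^ a) (vmod (int N) y)) = vmod (int N) ((A ^^ b) (vmod (int N) y))"
      using fun_cong[OF ab(2), of "vmod (int N) y"] by (simp add: g_def)
    then show ?thesis
      using funpow_vmod_cong[OF y \<open>vmod (int N) y \<in> Zk k\<close>] by simp
  qed
  have "periodic_mod (int N) (b - a)"
    unfolding periodic_mod_def
  proof
    fix x
    assume "x \<in> Zk k"
    then obtain w where w: "w \<in> Zk k" "(A ^^ a) w = x"
      using funpow_onto by blast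
    have "(A ^^ (b - a)) x = (A ^^ b) w"
      using ab(1) w(2) by (metis comp_apply funpow_add le_add_diff_inverse2 less_imp_le)
    then show "vmod (int N) ((A ^^ (b - a)) x) = vmod (int N) x"
      using same[OF w(1)] w(2) by simp
  qed
  then show ?thesis
    using ab(1) by (intro exI[of _ "b - a"]) simp
qed

lemma periodic_mod_pow2:
  assumes "periodic_mod 4 P"
  shows "periodic_mod (2 ^ (j + 2)) (2 ^ j * P)"
proof (induction j)
  case (Suc j)
  have "\<forall>x\<in>Zk k. vmod (2 * 2 ^ (j + 2)) ((A ^^ (2 ^ j * P)) ((A ^^ (2 ^ j * P)) x))
      = vmod (2 * 2 ^ (j + 2)) x"
    by (rule affine_Zk_twice_vmod_double[OF affine_Zk_funpow[OF affine]])
      (use Suc.IH in \<open>simp_all add: periodic_mod_def\<close>)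
  moreover have "(A ^^ (2 ^ Suc j * P)) = (A ^^ (2 ^ j * P)) \<circ> (A ^^ (2 ^ j * P))"
    by (simp add: funpow_add[symmetric] mult_2 add_mult_distrib)
  ultimately show ?case
    by (simp add: periodic_mod_def algebra_simps)
qed (use assms in simp)

text \<open>With \<open>c\<close> orbits and \<open>A\<^bsup>P\<^esup> \<equiv> id\<close> modulo \<open>N\<close>, the \<open>N\<^sup>k\<close> residues modulo \<open>N\<close> number at
  most \<open>c P\<close>. Along \<open>N = 2\<^bsup>j+2\<^esup>\<close> the period can be taken to be \<open>2\<^sup>j s\<close>, linear in \<open>N\<close>,
  which is too small as soon as \<open>k \<ge> 2\<close>.\<close>

theorem infinite_orbits_if_two_le_dim:
  assumes "2 \<le> k"
  shows "infinite (Zk k // orbit_rel)"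
proof
  assume fin: "finite (Zk k // orbit_rel)"
  define c where "c = card (Zk k // orbit_rel)"
  obtain s where s: "s > 0" "periodic_mod 4 s"
    using periodic_mod_exists[of 4] by auto
  define j where "j = c * s"
  define N :: nat where "N = 2 ^ (j + 2)"
  have "N ^ k \<le> c * (2 ^ j * s)"
    using card_vmod_Zk_le_orbits[OF fin _ periodic_mod_pow2[OF s(2), of j]] s(1)
      card_vmod_Zk[of N k]
    by (simp add: N_def c_def)
  moreover have "N * N \<le> N ^ k"
    using assms power_increasing[of 2 k N] by (simp add: N_def power2_eq_square)
  moreover have "c * (2 ^ j * s) < N * N"
  proof -
    have "c * (2 ^ j * s) = j * 2 ^ j"
      by (simp add: j_def)
    also have "\<dots> < 2 ^ j * 2 ^ j"
      by (simp add: less_exp)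
    also have "\<dots> \<le> N * N"
      by (simp add: N_def mult_le_mono)
    finally show ?thesis .
  qed
  ultimately show False
    by linarith
qed

theorem infinite_orbits_if_involution:
  assumes "1 \<le> k" and inv: "\<forall>x\<in>Zk k. A (A x) = x"
  shows "infinite (Zk k // orbit_rel)"
proof
  assume fin: "finite (Zk k // orbit_rel)"
  define N where "N = 2 * card (Zk k // orbit_rel) + 1"
  have per: "periodic_mod (int N) 2"
    using inv by (simp add: periodic_mod_def numeral_2_eq_2)
  have "N ^ k \<le> card (Zk k // orbit_rel) * 2"
    using card_vmod_Zk_le_orbits[OF fin _ per] card_vmod_Zk(2)[of N k] by (simp add: N_def)
  moreover have "N \<le> N ^ k"
    using assms(1) by (intro self_le_power) (simp_all add: N_def)
  ultimately show False
    unfolding N_def by linarith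
qed

end

section \<open>Translates of the image of a degenerate affine map\<close>

lemma card_image_mult_le_card:
  assumes fin: "finite H" and fib: "\<And>w. w \<in> f ` H \<Longrightarrow> p \<le> card {h\<in>H. f h = w}"
  shows "card (f ` H) * p \<le> card H"
proof -
  have "card (f ` H) * p \<le> (\<Sum>w\<in>f ` H. card {h\<in>H. f h = w})"
    using sum_bounded_below[of "f ` H" p] fib by (simp add: mult.commute)
  also have "\<dots> = card (\<Union>w\<in>f ` H. {h\<in>H. f h = w})"
    by (rule card_UN_disjoint[symmetric]) (use fin in auto)
  also have "(\<Union>w\<in>f ` H. {h\<in>H. f h = w}) = H"
    by auto
  finally show ?thesis .
qed

lemma card_le_card_mult_if_covered:
  assumes fin: "finite H" and cover: "H \<subseteq> \<Union>C" and small: "\<And>T. T \<in> C \<Longrightarrow> T \<subseteq> H \<and> card T \<le> m"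
  shows "card H \<le> card C * m"
proof -
  have "finite C"
    using small fin by (meson Pow_iff finite_Pow_iff finite_subset subsetI)
  have "card H \<le> card (\<Union>C)"
    using cover small fin by (intro card_mono) (auto intro: finite_subset)
  also have "\<dots> \<le> sum card C"
    by (rule card_Union_le_sum_card)
  also have "\<dots> \<le> card C * m"
    using sum_bounded_above[of C card m] small by simp
  finally show ?thesis .
qed

lemma inj_on_vmod_add_smul_prime:
  assumes p: "prime p" "\<bar>d i\<bar> < int p" "d i \<noteq> 0"
  shows "inj_on (\<lambda>t. vmod (int p) (z + smul (int t) d)) {..<p}"
proof (rule inj_onI)
  fix t t'
  assume tt: "t \<in> {..<p}" "t' \<in> {..<p}"
    and "vmod (int p) (z + smul (int t) d) = vmod (int p) (z + smul (int t') d)"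
  then have "int p dvd (int t - int t') * d i"
    by (auto simp: vmod_eq_iff smul_def algebra_simps)
  moreover have "\<not> int p dvd d i"
    using p dvd_imp_le_int[of "d i" "int p"] by auto
  ultimately have "int p dvd int t - int t'"
    using p(1) prime_dvd_mult_iff[of "int p"] by auto
  moreover have "\<bar>int t - int t'\<bar> < int p"
    using tt by auto
  ultimately show "t = t'"
    using dvd_imp_le_int[of "int t - int t'" "int p"] by fastforce
qed

text \<open>If \<open>D\<close> is constant along \<open>z\<^sub>0\<close>, each residue in the image of \<open>D\<close> modulo \<open>p\<close> has the
  \<open>p\<close> preimages \<open>z + t z\<^sub>0\<close>, \<open>t < p\<close>, among the \<open>p\<^sup>k\<close> residues.\<close>

lemma card_vmod_degenerate_image_mult_le:
  assumes D: "affine_Zk k D" and z0: "z0 \<in> Zk k" "z0 i \<noteq> 0" "D z0 = D 0"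
    and p: "prime p" "\<bar>z0 i\<bar> < int p"
  shows "card ((\<lambda>z. vmod (int p) (D z)) ` Zk k) * p \<le> p ^ k"
proof -
  have p0: "p > 0"
    using p(1) prime_gt_0_nat by blast
  define H where "H = vmod (int p) ` Zk k"
  have finH: "finite H"
    using card_vmod_Zk[OF p0] by (simp add: H_def)
  have D_vmod: "vmod (int p) (D (vmod (int p) y)) = vmod (int p) (D y)" if "y \<in> Zk k" for y
    using affine_Zk_vmod_cong[OF D Zk_vmod[OF that] that vmod_vmod] .
  have image: "(\<lambda>h. vmod (int p) (D h)) ` H = (\<lambda>z. vmod (int p) (D z)) ` Zk k"
    unfolding H_def image_image using D_vmod by (auto simp: image_iff)
  have "p \<le> card {h\<in>H. vmod (int p) (D h) = w}" if w: "w \<in> (\<lambda>h. vmod (int p) (D h)) ` H" for w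
  proof -
    obtain z where z: "z \<in> Zk k" "w = vmod (int p) (D z)"
      using w image by auto
    have "D (z + smul t z0) = D z" for t
      using affine_Zk_add[OF D z(1), of "smul t z0"] affine_Zk_smul[OF D z0(1)] z0 by simp
    then have sub:
      "(\<lambda>t. vmod (int p) (z + smul (int t) z0)) ` {..<p} \<subseteq> {h\<in>H. vmod (int p) (D h) = w}"
      using z z0 D_vmod by (auto simp: H_def)
    have "p = card ((\<lambda>t. vmod (int p) (z + smul (int t) z0)) ` {..<p})"
      using card_image[OF inj_on_vmod_add_smul_prime[of p z0 i z, OF p(1) p(2) z0(2)]] by simp
    also have "\<dots> \<le> card {h\<in>H. vmod (int p) (D h) = w}"
      using finH by (intro card_mono[OF _ sub]) simp
    finally show ?thesis .
  qed
  then have "card ((\<lambda>h. vmod (int p) (D h)) ` H) * p \<le> card H"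
    by (rule card_image_mult_le_card[OF finH])
  then show ?thesis
    unfolding image using card_vmod_Zk(2)[OF p0] by (simp add: H_def)
qed

lemma finite_vmod_affine_image:
  assumes "affine_Zk k D" "N > 0"
  shows "finite ((\<lambda>z. vmod (int N) (D z)) ` Zk k)"
proof (rule finite_subset[OF _ card_vmod_Zk(1)[OF assms(2)]])
  show "(\<lambda>z. vmod (int N) (D z)) ` Zk k \<subseteq> vmod (int N) ` Zk k"
    using affine_Zk_closed[OF assms(1)] by blast
qed

lemma card_vmod_Zk_le_translates:
  assumes D: "affine_Zk k D" and N: "N > 0"
  shows "N ^ k \<le> card ((\<lambda>y. (\<lambda>z. vmod (int N) (y + D z)) ` Zk k) ` Zk k)
    * card ((\<lambda>z. vmod (int N) (D z)) ` Zk k)"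
proof -
  define H where "H = vmod (int N) ` Zk k"
  define I where "I = (\<lambda>z. vmod (int N) (D z)) ` Zk k"
  have finH: "finite H"
    using card_vmod_Zk[OF N] by (simp add: H_def)
  have "card H \<le> card ((\<lambda>y. (\<lambda>z. vmod (int N) (y + D z)) ` Zk k) ` Zk k) * card I"
  proof (rule card_le_card_mult_if_covered[OF finH])
    show "H \<subseteq> \<Union>((\<lambda>y. (\<lambda>z. vmod (int N) (y + D z)) ` Zk k) ` Zk k)"
    proof
      fix h
      assume "h \<in> H"
      then obtain y where y: "y \<in> Zk k" "h = vmod (int N) y"
        by (auto simp: H_def)
      then have "h \<in> (\<lambda>z. vmod (int N) (y - D 0 + D z)) ` Zk k"
        by (intro image_eqI[of _ _ 0]) simp_all
      moreover have "y - D 0 \<in> Zk k"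
        using y affine_Zk_closed[OF D] by simp
      ultimately show "h \<in> \<Union>((\<lambda>y. (\<lambda>z. vmod (int N) (y + D z)) ` Zk k) ` Zk k)"
        by blast
    qed
    fix T
    assume "T \<in> (\<lambda>y. (\<lambda>z. vmod (int N) (y + D z)) ` Zk k) ` Zk k"
    then obtain y where y: "y \<in> Zk k" "T = (\<lambda>z. vmod (int N) (y + D z)) ` Zk k"
      by blast
    have "T \<subseteq> H"
    proof
      fix t
      assume "t \<in> T"
      then obtain z where z: "z \<in> Zk k" "t = vmod (int N) (y + D z)"
        using y by blast
      show "t \<in> H"
        unfolding H_def z(2) by (rule imageI[OF Zk_add[OF y(1) affine_Zk_closed[OF D z(1)]]])
    qed
    moreover have "T = (\<lambda>w. vmod (int N) (y + w)) ` I"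
      using y by (auto simp: I_def image_image vmod_add_vmod_right)
    then have "card T \<le> card I"
      using card_image_le finite_vmod_affine_image[OF D N] by (simp add: I_def)
    ultimately show "T \<subseteq> H \<and> card T \<le> card I"
      by blast
  qed
  then show ?thesis
    using card_vmod_Zk(2)[OF N] by (simp add: H_def I_def)
qed

text \<open>So the image of \<open>D\<close> has at most \<open>p\<^bsup>k-1\<^esup>\<close> elements and at least \<open>p\<close> of its
  translates are needed to cover all residues.\<close>

lemma card_translates_of_degenerate_image:
  assumes D: "affine_Zk k D" and z0: "z0 \<in> Zk k" "z0 i \<noteq> 0" "D z0 = D 0"
    and p: "prime p" "\<bar>z0 i\<bar> < int p"
  shows "p \<le> card ((\<lambda>y. (\<lambda>z. vmod (int p) (y + D z)) ` Zk k) ` Zk k)"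
proof -
  define I where "I = (\<lambda>z. vmod (int p) (D z)) ` Zk k"
  have p0: "p > 0"
    using p(1) prime_gt_0_nat by blast
  have "card I * p \<le> card ((\<lambda>y. (\<lambda>z. vmod (int p) (y + D z)) ` Zk k) ` Zk k) * card I"
    using card_vmod_degenerate_image_mult_le[OF D z0 p] card_vmod_Zk_le_translates[OF D p0]
    unfolding I_def by linarith
  moreover have "vmod (int p) (D 0) \<in> I"
    unfolding I_def by (rule imageI[OF Zk_zero])
  then have "card I > 0"
    using card_gt_0_iff finite_vmod_affine_image[OF D p0] unfolding I_def by blast
  ultimately show ?thesis
    by simp
qed

section \<open>The shape of an automorphism of \<open>Z\<^sub>2 wr Z\<^sup>k\<close>\<close>

locale wreath_aut =
  fixes k :: nat and \<phi>
  assumes iso: "\<phi> \<in> iso (Z2_wr_Zk k) (Z2_wr_Zk k)"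
begin

abbreviation G where "G \<equiv> Z2_wr_Zk k"

lemma hom: "\<phi> \<in> hom G G"
  using iso by (simp add: iso_def)

lemma group_hom: "group_hom G G \<phi>"
  using hom group_Z2_wr_Zk by (simp add: group_hom_def group_hom_axioms_def)

lemma phi_closed: "g \<in> carrier G \<Longrightarrow> \<phi> g \<in> carrier G"
  using hom by (rule hom_in_carrier)

lemma phi_mult: "g \<in> carrier G \<Longrightarrow> h \<in> carrier G \<Longrightarrow> \<phi> (g \<otimes>\<^bsub>G\<^esub> h) = \<phi> g \<otimes>\<^bsub>G\<^esub> \<phi> h"
  using hom by (rule hom_mult)

lemma phi_inv: "g \<in> carrier G \<Longrightarrow> \<phi> (inv\<^bsub>G\<^esub> g) = inv\<^bsub>G\<^esub> (\<phi> g)"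
  using group_hom by (rule group_hom.hom_inv)

lemma phi_inj: "g \<in> carrier G \<Longrightarrow> h \<in> carrier G \<Longrightarrow> \<phi> g = \<phi> h \<Longrightarrow> g = h"
  using iso by (auto simp: iso_def bij_betw_def dest: inj_onD)

lemma phi_onto: "h \<in> carrier G \<Longrightarrow> \<exists>g\<in>carrier G. \<phi> g = h"
  using iso by (simp add: iso_def bij_betw_def) (metis imageE)

lemma base_in_carrier: "f \<in> fin_supp_Z2 k \<Longrightarrow> (f, 0) \<in> carrier G"
  and translation_in_carrier: "y \<in> Zk k \<Longrightarrow> ((\<lambda>_. False), y) \<in> carrier G"
  by (simp_all add: Z2_wr_Zk_carrier)

text \<open>The base group consists of the elements of order at most two, so \<open>\<phi>\<close> preserves it.\<close>

lemma snd_phi_eq_0_iff: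
  assumes g: "g \<in> carrier G"
  shows "snd (\<phi> g) = 0 \<longleftrightarrow> snd g = 0"
proof -
  interpret group G
    by (rule group_Z2_wr_Zk)
  have "\<phi> g \<otimes>\<^bsub>G\<^esub> \<phi> g = \<one>\<^bsub>G\<^esub> \<longleftrightarrow> \<phi> (g \<otimes>\<^bsub>G\<^esub> g) = \<phi> \<one>\<^bsub>G\<^esub>"
    using g group_hom.hom_one[OF group_hom] by (simp add: phi_mult)
  also have "\<dots> \<longleftrightarrow> g \<otimes>\<^bsub>G\<^esub> g = \<one>\<^bsub>G\<^esub>"
    using phi_inj[OF m_closed[OF g g] one_closed] by auto
  finally show ?thesis
    by (simp add: Z2_wr_Zk_square_eq_one_iff)
qed

definition lin :: "(nat \<Rightarrow> int) \<Rightarrow> (nat \<Rightarrow> int)" where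
  "lin y = snd (\<phi> ((\<lambda>_. False), y))"

definition phi_base :: "((nat \<Rightarrow> int) \<Rightarrow> bool) \<Rightarrow> ((nat \<Rightarrow> int) \<Rightarrow> bool)" where
  "phi_base f = fst (\<phi> (f, 0))"

lemma phi_base:
  assumes "f \<in> fin_supp_Z2 k"
  shows "\<phi> (f, 0) = (phi_base f, 0)"
  using snd_phi_eq_0_iff[OF base_in_carrier[OF assms]] by (simp add: phi_base_def prod_eq_iff)

lemma phi_base_closed: "f \<in> fin_supp_Z2 k \<Longrightarrow> phi_base f \<in> fin_supp_Z2 k"
  using phi_closed[OF base_in_carrier] phi_base by (simp add: Z2_wr_Zk_carrier)

lemma phi_translation: "\<phi> ((\<lambda>_. False), y) = (fst (\<phi> ((\<lambda>_. False), y)), lin y)"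
  by (simp add: lin_def)

lemma lin_closed: "y \<in> Zk k \<Longrightarrow> lin y \<in> Zk k"
  using phi_closed[OF translation_in_carrier] by (auto simp: lin_def Z2_wr_Zk_carrier mem_Times_iff)

lemma snd_phi:
  assumes "(f, y) \<in> carrier G"
  shows "snd (\<phi> (f, y)) = lin y"
proof -
  have f: "f \<in> fin_supp_Z2 k" and y: "y \<in> Zk k"
    using assms by (auto simp: Z2_wr_Zk_carrier)
  have "(f, y) = (f, 0) \<otimes>\<^bsub>G\<^esub> ((\<lambda>_. False), y)"
    by (simp add: Z2_wr_Zk_mult)
  then have "\<phi> (f, y) = (phi_base f, 0) \<otimes>\<^bsub>G\<^esub> (fst (\<phi> ((\<lambda>_. False), y)), lin y)"
    using phi_mult[OF base_in_carrier[OF f] translation_in_carrier[OF y]] phi_base[OF f]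
      phi_translation by simp
  then show ?thesis
    by (simp add: Z2_wr_Zk_mult)
qed

lemma lin_add:
  assumes "y \<in> Zk k" "z \<in> Zk k"
  shows "lin (y + z) = lin y + lin z"
proof -
  have "((\<lambda>_. False), y + z) = ((\<lambda>_. False), y) \<otimes>\<^bsub>G\<^esub> ((\<lambda>_. False), z)"
    by (simp add: Z2_wr_Zk_mult)
  then have "\<phi> ((\<lambda>_. False), y + z)
      = (fst (\<phi> ((\<lambda>_. False), y)), lin y) \<otimes>\<^bsub>G\<^esub> (fst (\<phi> ((\<lambda>_. False), z)), lin z)"
    using phi_mult[OF translation_in_carrier translation_in_carrier] assms phi_translation
    by metis
  then show ?thesis
    by (simp add: lin_def[of "y + z"] Z2_wr_Zk_mult)
qed

lemma lin_zero: "lin 0 = 0"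
  using lin_add[of 0 0] by simp

lemma affine_lin: "affine_Zk k lin"
  by (simp add: affine_Zk_def lin_closed lin_add lin_zero)

lemma lin_uminus: "y \<in> Zk k \<Longrightarrow> lin (- y) = - lin y"
  using affine_Zk_diff[OF affine_lin, of 0 y] by (simp add: lin_zero)

lemma lin_smul: "y \<in> Zk k \<Longrightarrow> lin (smul n y) = smul n (lin y)"
  using affine_Zk_smul[OF affine_lin] by (simp add: lin_zero)

lemma lin_onto: "w \<in> Zk k \<Longrightarrow> \<exists>y\<in>Zk k. lin y = w"
proof -
  assume "w \<in> Zk k"
  then obtain g where g: "g \<in> carrier G" "\<phi> g = ((\<lambda>_. False), w)"
    using phi_onto[OF translation_in_carrier] by blast
  then show ?thesis
    using snd_phi[of "fst g" "snd g"] by (force simp: Z2_wr_Zk_carrier)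
qed

lemma lin_inj_on: "inj_on lin (Zk k)"
proof (rule inj_onI)
  fix y z
  assume yz: "y \<in> Zk k" "z \<in> Zk k" "lin y = lin z"
  then have "snd (\<phi> ((\<lambda>_. False), y - z)) = 0"
    using affine_Zk_diff[OF affine_lin] by (simp add: lin_def[symmetric] lin_zero)
  then have "y - z = 0"
    using snd_phi_eq_0_iff[OF translation_in_carrier[of "y - z"]] yz by simp
  then show "y = z"
    by simp
qed

lemma phi_base_xor:
  assumes f: "f \<in> fin_supp_Z2 k" and g: "g \<in> fin_supp_Z2 k"
  shows "phi_base (\<lambda>x. f x \<noteq> g x) = (\<lambda>x. phi_base f x \<noteq> phi_base g x)"
proof -
  have "((\<lambda>x. f x \<noteq> g x), 0) = (f, 0) \<otimes>\<^bsub>G\<^esub> (g, 0)"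
    by (simp add: Z2_wr_Zk_mult)
  then have "(phi_base (\<lambda>x. f x \<noteq> g x), 0) = (phi_base f, 0) \<otimes>\<^bsub>G\<^esub> (phi_base g, 0)"
    using phi_mult[OF base_in_carrier[OF f] base_in_carrier[OF g]]
      phi_base[OF f] phi_base[OF g] phi_base[OF fin_supp_Z2_xor[OF f g]] by simp
  then show ?thesis
    by (simp add: Z2_wr_Zk_mult)
qed

text \<open>\<open>\<delta>\<^sub>y\<close> is the conjugate of \<open>\<delta>\<^sub>0\<close> by the translation \<open>y\<close>, so its image is
  the image of \<open>\<delta>\<^sub>0\<close> shifted by \<open>lin y\<close>.\<close>

lemma phi_base_delta:
  assumes y: "y \<in> Zk k"
  shows "phi_base (\<lambda>x. x = y) = (\<lambda>x. phi_base (\<lambda>x. x = 0) (x - lin y))"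
proof -
  interpret group G
    by (rule group_Z2_wr_Zk)
  define t where "t = ((\<lambda>_::nat \<Rightarrow> int. False), y)"
  have t: "t \<in> carrier G"
    using y by (simp add: t_def Z2_wr_Zk_carrier)
  obtain a where a: "\<phi> t = (a, lin y)"
    using phi_translation[of y] unfolding t_def by blast
  have a_in: "(a, lin y) \<in> carrier G"
    using phi_closed[OF t] a by simp
  have "((\<lambda>x. x = y), 0) = t \<otimes>\<^bsub>G\<^esub> ((\<lambda>x. x = 0), 0) \<otimes>\<^bsub>G\<^esub> inv\<^bsub>G\<^esub> t"
    using t by (simp add: t_def Z2_wr_Zk_inv Z2_wr_Zk_mult)
  then have "(phi_base (\<lambda>x. x = y), 0)
      = (a, lin y) \<otimes>\<^bsub>G\<^esub> (phi_base (\<lambda>x. x = 0), 0) \<otimes>\<^bsub>G\<^esub> inv\<^bsub>G\<^esub> (a, lin y)"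
    using t phi_base[of "\<lambda>x. x = y"] phi_base[of "\<lambda>x. x = 0"] y a
    by (simp add: phi_mult phi_inv base_in_carrier)
  also have "\<dots> = ((\<lambda>x. phi_base (\<lambda>x. x = 0) (x - lin y)), 0)"
    using a_in by (simp add: Z2_wr_Zk_inv Z2_wr_Zk_mult fun_eq_iff) blast
  finally show ?thesis
    by simp
qed

lemma phi_base_empty: "phi_base (\<lambda>_. False) = (\<lambda>_. False)"
  using phi_base[of "\<lambda>_. False"] group_hom.hom_one[OF group_hom] by (simp add: Z2_wr_Zk_one)

lemma phi_base_indicator:
  assumes "finite V" "V \<subseteq> Zk k"
  shows "phi_base (\<lambda>x. x \<in> V) = (\<lambda>x. odd (card {y\<in>V. phi_base (\<lambda>x. x = 0) (x - lin y)}))"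
  using assms
proof (induction V rule: finite_induct)
  case empty
  then show ?case
    using phi_base_empty by simp
next
  case (insert y V)
  have y: "y \<in> Zk k" and V: "V \<subseteq> Zk k"
    using insert.prems by auto
  have "(\<lambda>x. x \<in> insert y V) = (\<lambda>x. (x \<in> V) \<noteq> (x = y))"
    using insert.hyps by auto
  then have "phi_base (\<lambda>x. x \<in> insert y V) = (\<lambda>x. phi_base (\<lambda>x. x \<in> V) x \<noteq> phi_base (\<lambda>x. x = y) x)"
    using phi_base_xor[OF fin_supp_Z2_indicator[OF insert.hyps(1) V] fin_supp_Z2_delta[OF y]]
    by simp
  also have "\<dots> = (\<lambda>x. odd (card {y'\<in>insert y V. phi_base (\<lambda>x. x = 0) (x - lin y')}))"
    unfolding insert.IH[OF V] phi_base_delta[OF y]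
  proof (rule ext)
    fix x
    have fin: "finite {y\<in>V. phi_base (\<lambda>x. x = 0) (x - lin y)}"
      using insert.hyps by simp
    show "odd (card {y\<in>V. phi_base (\<lambda>x. x = 0) (x - lin y)}) \<noteq> phi_base (\<lambda>x. x = 0) (x - lin y)
        \<longleftrightarrow> odd (card {y'\<in>insert y V. phi_base (\<lambda>x. x = 0) (x - lin y')})"
    proof (cases "phi_base (\<lambda>x. x = 0) (x - lin y)")
      case True
      then have "{y'\<in>insert y V. phi_base (\<lambda>x. x = 0) (x - lin y')}
          = insert y {y\<in>V. phi_base (\<lambda>x. x = 0) (x - lin y)}"
        by auto
      then show ?thesis
        using True fin insert.hyps by simp
    next
      case False
      then have "{y'\<in>insert y V. phi_base (\<lambda>x. x = 0) (x - lin y')}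
          = {y\<in>V. phi_base (\<lambda>x. x = 0) (x - lin y)}"
        by auto
      then show ?thesis
        using False by simp
    qed
  qed
  finally show ?case .
qed

text \<open>\<open>\<phi>\<close> maps some \<open>1\<^sub>V\<close> onto \<open>\<delta>\<^sub>0\<close>; by the formula above, the support of the image of
  \<open>\<delta>\<^sub>0\<close> then has parity convolution \<open>\<delta>\<^sub>0\<close> with \<open>lin ` V\<close>.\<close>

lemma phi_base_delta_zero: "\<exists>c\<in>Zk k. phi_base (\<lambda>x. x = 0) = (\<lambda>x. x = c)"
proof -
  obtain g where g: "g \<in> carrier G" "\<phi> g = ((\<lambda>x. x = 0), 0)"
    using phi_onto[OF base_in_carrier[OF fin_supp_Z2_delta[OF Zk_zero]]] by blast
  define V where "V = {x. fst g x}"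
  have "snd g = 0"
    using snd_phi_eq_0_iff[OF g(1)] g(2) by simp
  then have "g = ((\<lambda>x. x \<in> V), 0)"
    by (simp add: V_def prod_eq_iff)
  then have V: "finite V" "V \<subseteq> Zk k" and phi_V: "phi_base (\<lambda>x. x \<in> V) = (\<lambda>x. x = 0)"
    using g phi_base[of "\<lambda>x. x \<in> V"] by (auto simp: Z2_wr_Zk_carrier mem_fin_supp_Z2_iff)
  define U where "U = {x. phi_base (\<lambda>x. x = 0) x}"
  have U: "finite U" "U \<subseteq> Zk k"
    using phi_base_closed[OF fin_supp_Z2_delta[OF Zk_zero]]
    by (auto simp: mem_fin_supp_Z2_iff U_def)
  have "odd (card {w\<in>lin ` V. x - w \<in> U}) \<longleftrightarrow> x = 0" for x
  proof -
    have "{w\<in>lin ` V. x - w \<in> U} = lin ` {y\<in>V. phi_base (\<lambda>x. x = 0) (x - lin y)}"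
      by (auto simp: U_def)
    moreover have "inj_on lin {y\<in>V. phi_base (\<lambda>x. x = 0) (x - lin y)}"
      using V(2) by (auto intro: inj_on_subset[OF lin_inj_on])
    ultimately show ?thesis
      using fun_cong[OF phi_V[unfolded phi_base_indicator[OF V]], of x] by (simp add: card_image)
  qed
  then obtain c where "U = {c}"
    using parity_convolution_unit_singleton[OF U(1) _ U(2)] V lin_closed by blast
  then have "phi_base (\<lambda>x. x = 0) = (\<lambda>x. x = c)"
    by (auto simp: U_def)
  then show ?thesis
    using U(2) \<open>U = {c}\<close> by auto
qed

definition base_center :: "nat \<Rightarrow> int" where
  "base_center = (SOME c. c \<in> Zk k \<and> phi_base (\<lambda>x. x = 0) = (\<lambda>x. x = c))"

lemma base_center: "base_center \<in> Zk k" "phi_base (\<lambda>x. x = 0) = (\<lambda>x. x = base_center)"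
  using someI_ex[OF phi_base_delta_zero[unfolded Bex_def]] by (auto simp: base_center_def)

definition supp_map :: "(nat \<Rightarrow> int) \<Rightarrow> (nat \<Rightarrow> int)" where
  "supp_map x = lin x + base_center"

lemma supp_map_inj_on: "inj_on supp_map (Zk k)"
  using lin_inj_on by (simp add: inj_on_def supp_map_def)

lemma supp_phi_base:
  assumes f: "f \<in> fin_supp_Z2 k"
  shows "{x. phi_base f x} = supp_map ` {x. f x}"
proof -
  define V where "V = {x. f x}"
  have V: "finite V" "V \<subseteq> Zk k"
    using f by (auto simp: mem_fin_supp_Z2_iff V_def)
  have "odd (card {y\<in>V. phi_base (\<lambda>x. x = 0) (x - lin y)}) \<longleftrightarrow> x \<in> supp_map ` V" for x
  proof -
    have eq: "{y\<in>V. phi_base (\<lambda>x. x = 0) (x - lin y)} = {y\<in>V. supp_map y = x}"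
      by (auto simp: base_center supp_map_def algebra_simps)
    show ?thesis
    proof (cases "x \<in> supp_map ` V")
      case True
      then obtain y where "y \<in> V" "supp_map y = x"
        by blast
      then have "{y\<in>V. supp_map y = x} = {y}"
        using inj_onD[OF supp_map_inj_on] V(2) by blast
      then show ?thesis
        using True eq by simp
    next
      case False
      then have "{y\<in>V. supp_map y = x} = {}"
        by blast
      then show ?thesis
        using False unfolding eq by (simp only: card.empty) simp
    qed
  qed
  then have "phi_base f = (\<lambda>x. x \<in> supp_map ` V)"
    using phi_base_indicator[OF V] by (simp add: V_def)
  then show ?thesis
    by (simp add: V_def)
qed

end

sublocale wreath_aut \<subseteq> supp: affine_onto k supp_map
proof
  show "affine_Zk k supp_map"
    using affine_lin base_center(1)
    by (simp add: affine_Zk_def supp_map_def lin_zero algebra_simps)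
  show "supp_map ` Zk k = Zk k"
  proof
    show "supp_map ` Zk k \<subseteq> Zk k"
      using lin_closed base_center(1) by (auto simp: supp_map_def)
    show "Zk k \<subseteq> supp_map ` Zk k"
    proof
      fix w
      assume "w \<in> Zk k"
      then obtain y where "y \<in> Zk k" "lin y = w - base_center"
        using lin_onto base_center(1) by (meson Zk_diff)
      then show "w \<in> supp_map ` Zk k"
        by (auto simp: supp_map_def image_iff intro!: bexI[of _ y])
    qed
  qed
qed

section \<open>Infinitely many Reidemeister classes\<close>

context wreath_aut
begin

lemma tc_equiv: "equiv (carrier G) (twisted_conj G \<phi>)"
  using group.twisted_conj_equiv[OF group_Z2_wr_Zk hom] .

lemma twisted_conj_snd:
  assumes "(g, g') \<in> twisted_conj G \<phi>"
  shows "\<exists>z\<in>Zk k. snd g' = snd g + (z - lin z)"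
proof -
  obtain h where g: "g \<in> carrier G" and h: "h \<in> carrier G"
    and g': "g' = h \<otimes>\<^bsub>G\<^esub> g \<otimes>\<^bsub>G\<^esub> \<phi> (inv\<^bsub>G\<^esub> h)"
    using assms unfolding twisted_conj_def by blast
  obtain f z where hz: "h = (f, z)"
    by (cases h)
  have z: "z \<in> Zk k" and f: "f \<in> fin_supp_Z2 k"
    using h hz by (auto simp: Z2_wr_Zk_carrier)
  have "inv\<^bsub>G\<^esub> h \<in> carrier G"
    using h group.inv_closed[OF group_Z2_wr_Zk] by blast
  then have "snd (\<phi> (inv\<^bsub>G\<^esub> h)) = lin (- z)"
    using snd_phi Z2_wr_Zk_inv[of f z k] h hz by simp
  then have "snd g' = snd g + (z - lin z)"
    using g' hz lin_uminus[OF z]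
    by (cases g, cases "\<phi> (inv\<^bsub>G\<^esub> h)") (simp add: Z2_wr_Zk_mult algebra_simps)
  then show ?thesis
    using z by blast
qed

text \<open>\<open>twisted_residues p y\<close> is the coset of \<open>y\<close> modulo \<open>p Z\<^sup>k + (1 - lin) Z\<^sup>k\<close>; by
  \<open>twisted_conj_snd\<close> it only depends on the Reidemeister class of \<open>(f, y)\<close>.\<close>

definition twisted_residues :: "int \<Rightarrow> (nat \<Rightarrow> int) \<Rightarrow> (nat \<Rightarrow> int) set" where
  "twisted_residues p y = (\<lambda>z. vmod p (y + (z - lin z))) ` Zk k"

lemma affine_id_minus_lin: "affine_Zk k (\<lambda>z. z - lin z)"
  using affine_lin by (simp add: affine_Zk_def lin_zero algebra_simps)

lemma twisted_residues_shift:
  assumes z: "z \<in> Zk k"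
  shows "twisted_residues p (y + (z - lin z)) = twisted_residues p y"
proof
  show "twisted_residues p (y + (z - lin z)) \<subseteq> twisted_residues p y"
  proof
    fix r
    assume "r \<in> twisted_residues p (y + (z - lin z))"
    then obtain w where w: "w \<in> Zk k" "r = vmod p (y + (z - lin z) + (w - lin w))"
      by (auto simp: twisted_residues_def)
    then have "r = vmod p (y + ((z + w) - lin (z + w)))"
      using lin_add[OF z w(1)] by (simp add: algebra_simps)
    then show "r \<in> twisted_residues p y"
      using w z by (auto simp: twisted_residues_def)
  qed
  show "twisted_residues p y \<subseteq> twisted_residues p (y + (z - lin z))"
  proof
    fix r
    assume "r \<in> twisted_residues p y"
    then obtain w where w: "w \<in> Zk k" "r = vmod p (y + (w - lin w))"
      by (auto simp: twisted_residues_def)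
    moreover have "lin (w - z) = lin w - lin z"
      using affine_Zk_diff[OF affine_lin w(1) z] by (simp add: lin_zero)
    ultimately have "r = vmod p (y + (z - lin z) + ((w - z) - lin (w - z)))"
      by (simp add: algebra_simps)
    then show "r \<in> twisted_residues p (y + (z - lin z))"
      unfolding twisted_residues_def using w(1) z by (intro image_eqI[of _ _ "w - z"]) simp_all
  qed
qed

lemma twisted_residues_twisted_conj:
  "(g, g') \<in> twisted_conj G \<phi> \<Longrightarrow> twisted_residues p (snd g) = twisted_residues p (snd g')"
  using twisted_conj_snd twisted_residues_shift by metis

text \<open>A fixed vector \<open>z\<^sub>0\<close> makes \<open>1 - lin\<close> degenerate, so modulo a large prime \<open>p\<close> there are
  at least \<open>p\<close> distinct sets \<open>twisted_residues p y\<close>.\<close>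

theorem infinite_classes_if_fixed_vector:
  assumes z0: "z0 \<in> Zk k" "z0 \<noteq> 0" "lin z0 = z0"
  shows "infinite (reidemeister_classes G \<phi>)"
proof
  assume fin: "finite (reidemeister_classes G \<phi>)"
  obtain i where i: "z0 i \<noteq> 0"
    using z0(2) by (auto simp: fun_eq_iff)
  obtain p where p: "prime p" "max (nat \<bar>z0 i\<bar>) (card (reidemeister_classes G \<phi>)) < p"
    using bigger_prime by blast
  have "\<bar>z0 i\<bar> < int p"
    using p(2) by linarith
  then have "p \<le> card (twisted_residues (int p) ` Zk k)"
    using card_translates_of_degenerate_image[OF affine_id_minus_lin z0(1) i _ p(1)] z0(3)
    by (simp add: twisted_residues_def lin_zero)
  also have "\<dots> \<le> card ((\<lambda>g. twisted_residues (int p) (snd g)) ` carrier G)"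
  proof (rule card_mono)
    show "finite ((\<lambda>g. twisted_residues (int p) (snd g)) ` carrier G)"
      using card_image_le_card_quotient(1)[OF tc_equiv twisted_residues_twisted_conj] fin
      by (simp add: reidemeister_classes_def)
    show "twisted_residues (int p) ` Zk k \<subseteq> (\<lambda>g. twisted_residues (int p) (snd g)) ` carrier G"
    proof
      fix r
      assume "r \<in> twisted_residues (int p) ` Zk k"
      then obtain y where y: "y \<in> Zk k" "r = twisted_residues (int p) y"
        by blast
      show "r \<in> (\<lambda>g. twisted_residues (int p) (snd g)) ` carrier G"
        by (rule image_eqI[OF _ translation_in_carrier[OF y(1)]]) (simp add: y(2))
    qed
  qed
  also have "\<dots> \<le> card (reidemeister_classes G \<phi>)"
    using card_image_le_card_quotient(2)[OF tc_equiv twisted_residues_twisted_conj] fin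
    by (simp add: reidemeister_classes_def)
  finally show False
    using p(2) by simp
qed

lemma base_twisted_conj:
  assumes no_fix: "\<forall>z\<in>Zk k. lin z = z \<longrightarrow> z = 0"
    and tc: "((b, 0), (b', 0)) \<in> twisted_conj G \<phi>"
  shows "\<exists>f\<in>fin_supp_Z2 k. b' = (\<lambda>x. (f x \<noteq> b x) \<noteq> phi_base f x)"
proof -
  obtain h where h: "h \<in> carrier G"
    and e: "(b', 0) = h \<otimes>\<^bsub>G\<^esub> (b, 0) \<otimes>\<^bsub>G\<^esub> \<phi> (inv\<^bsub>G\<^esub> h)"
    using tc unfolding twisted_conj_def by blast
  obtain f z where hz: "h = (f, z)"
    by (cases h)
  have z: "z \<in> Zk k" and f: "f \<in> fin_supp_Z2 k"
    using h hz by (auto simp: Z2_wr_Zk_carrier)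
  obtain z' where "z' \<in> Zk k" "0 = 0 + (z' - lin z')"
    using twisted_conj_snd[OF tc] by auto
  have "inv\<^bsub>G\<^esub> h \<in> carrier G"
    using h group.inv_closed[OF group_Z2_wr_Zk] by blast
  then have "snd (\<phi> (inv\<^bsub>G\<^esub> h)) = lin (- z)"
    using snd_phi Z2_wr_Zk_inv[of f z k] h hz by simp
  then have "0 = z - lin z"
    using e hz lin_uminus[OF z]
    by (cases "\<phi> (inv\<^bsub>G\<^esub> h)") (simp add: Z2_wr_Zk_mult algebra_simps)
  then have "z = 0"
    using no_fix z by simp
  then have "\<phi> (inv\<^bsub>G\<^esub> h) = (phi_base f, 0)"
    using Z2_wr_Zk_inv[of f z k] h hz phi_base[OF f] by simp
  then have "b' = (\<lambda>x. (f x \<noteq> b x) \<noteq> phi_base f x)"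
    using e hz \<open>z = 0\<close> by (simp add: Z2_wr_Zk_mult)
  then show ?thesis
    using f by blast
qed

text \<open>Twisted conjugation inside the base adds \<open>f + \<phi>(f)\<close>, and \<open>\<phi>\<close> moves the support of \<open>f\<close>
  by \<open>supp_map\<close>, which preserves its orbits; so the parity of the part of the support in
  each orbit is an invariant.\<close>

lemma twisted_conj_base_orbit_parity:
  assumes no_fix: "\<forall>z\<in>Zk k. lin z = z \<longrightarrow> z = 0"
    and tc: "((b, 0), (b', 0)) \<in> twisted_conj G \<phi>"
    and X: "X \<in> Zk k // supp.orbit_rel"
  shows "even (card ({x. b x} \<inter> X) + card ({x. b' x} \<inter> X))"
proof -
  have b: "b \<in> fin_supp_Z2 k"
    using tc by (auto simp: twisted_conj_def Z2_wr_Zk_carrier)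
  obtain f where f: "f \<in> fin_supp_Z2 k" and b': "b' = (\<lambda>x. (f x \<noteq> b x) \<noteq> phi_base f x)"
    using base_twisted_conj[OF no_fix tc] by blast
  have "{x. phi_base f x} \<inter> X = supp_map ` ({x. f x} \<inter> X)"
    using supp_phi_base[OF f] supp.apply_in_orbit_class_iff[OF X] f
    by (auto simp: mem_fin_supp_Z2_iff)
  moreover have "inj_on supp_map ({x. f x} \<inter> X)"
    using inj_on_subset[OF supp_map_inj_on] f by (simp add: mem_fin_supp_Z2_iff le_infI1)
  ultimately have "card ({x. phi_base f x} \<inter> X) = card ({x. f x} \<inter> X)"
    by (simp add: card_image)
  moreover have "even (card ({x. f x \<noteq> b x} \<inter> X) + card ({x. f x} \<inter> X) + card ({x. b x} \<inter> X))"
    by (rule even_card_xor_inter) (use f b in \<open>simp_all add: mem_fin_supp_Z2_iff\<close>)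
  moreover have "even (card ({x. (f x \<noteq> b x) \<noteq> phi_base f x} \<inter> X) + card ({x. f x \<noteq> b x} \<inter> X)
      + card ({x. phi_base f x} \<inter> X))"
    by (rule even_card_xor_inter)
      (use fin_supp_Z2_xor[OF f b] phi_base_closed[OF f] in \<open>simp_all add: mem_fin_supp_Z2_iff\<close>)
  ultimately show ?thesis
    unfolding b' by presburger
qed

definition orbit_point_class :: "(nat \<Rightarrow> int) set \<Rightarrow> (((nat \<Rightarrow> int) \<Rightarrow> bool) \<times> (nat \<Rightarrow> int)) set"
  where "orbit_point_class X = twisted_conj G \<phi> `` {((\<lambda>x. x = (SOME x. x \<in> X)), 0)}"

lemma orbit_point_class_in_classes:
  assumes "X \<in> Zk k // supp.orbit_rel"
  shows "((\<lambda>x. x = (SOME x. x \<in> X)), 0) \<in> carrier G"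
    and "orbit_point_class X \<in> reidemeister_classes G \<phi>"
proof -
  show in_G: "((\<lambda>x. x = (SOME x. x \<in> X)), 0) \<in> carrier G"
    using some_in_class[OF supp.orbit_rel_equiv assms] supp.orbit_class_subset[OF assms]
    by (intro base_in_carrier fin_supp_Z2_delta) blast
  show "orbit_point_class X \<in> reidemeister_classes G \<phi>"
    unfolding orbit_point_class_def reidemeister_classes_def by (rule quotientI[OF in_G])
qed

lemma inj_on_orbit_point_class:
  assumes no_fix: "\<forall>z\<in>Zk k. lin z = z \<longrightarrow> z = 0"
  shows "inj_on orbit_point_class (Zk k // supp.orbit_rel)"
proof (rule inj_onI)
  fix X Y
  assume X: "X \<in> Zk k // supp.orbit_rel" and Y: "Y \<in> Zk k // supp.orbit_rel"
    and "orbit_point_class X = orbit_point_class Y"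
  then have "(((\<lambda>x. x = (SOME x. x \<in> X)), 0), ((\<lambda>x. x = (SOME x. x \<in> Y)), 0)) \<in> twisted_conj G \<phi>"
    using eq_equiv_class_iff[OF tc_equiv orbit_point_class_in_classes(1)[OF X]
        orbit_point_class_in_classes(1)[OF Y]]
    by (simp add: orbit_point_class_def)
  then have "even (card ({x. x = (SOME x. x \<in> X)} \<inter> X) + card ({x. x = (SOME x. x \<in> Y)} \<inter> X))"
    by (rule twisted_conj_base_orbit_parity[OF no_fix _ X])
  moreover have "{x. x = (SOME x. x \<in> X)} \<inter> X = {SOME x. x \<in> X}"
    using some_in_class[OF supp.orbit_rel_equiv X] by auto
  ultimately have "(SOME x. x \<in> Y) \<in> X"
    by (cases "(SOME x. x \<in> Y) \<in> X") auto
  then have "X \<inter> Y \<noteq> {}"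
    using some_in_class[OF supp.orbit_rel_equiv Y] by blast
  then show "X = Y"
    using quotient_disj[OF supp.orbit_rel_equiv X Y] by blast
qed

lemma lin_eq_uminus_if_dim_1:
  assumes no_fix: "\<forall>z\<in>Zk k. lin z = z \<longrightarrow> z = 0" and k: "k = 1" and y: "y \<in> Zk k"
  shows "lin y = - y"
proof -
  define e :: "nat \<Rightarrow> int" where "e = (\<lambda>i. if i = 0 then 1 else 0)"
  have e: "e \<in> Zk k"
    using k by (simp add: mem_Zk_iff e_def)
  have dec: "x = smul (x 0) e" if "x \<in> Zk k" for x
    using that k by (auto simp: fun_eq_iff smul_def e_def mem_Zk_iff)
  define a where "a = lin e 0"
  have lin_e: "lin e = smul a e"
    unfolding a_def by (rule dec[OF lin_closed[OF e]])
  have lin_dec: "lin x = smul (x 0 * a) e" if "x \<in> Zk k" for x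
  proof -
    have "lin x = lin (smul (x 0) e)"
      using arg_cong[OF dec[OF that], of lin] .
    also have "\<dots> = smul (x 0 * a) e"
      using lin_smul[OF e] lin_e by (simp add: smul_def fun_eq_iff)
    finally show ?thesis .
  qed
  obtain x where x: "x \<in> Zk k" "lin x = e"
    using lin_onto[OF e] by blast
  have "x 0 * a = 1"
    using fun_cong[OF lin_dec[OF x(1)], of 0] x(2) by (simp add: smul_def e_def)
  moreover have "a \<noteq> 1"
  proof
    assume "a = 1"
    then have "e = 0"
      using no_fix e lin_e by simp
    then have "e 0 = 0"
      by simp
    then show False
      by (simp add: e_def)
  qed
  ultimately have "a = -1"
    using zmult_eq_1_iff by blast
  then have "lin y = - smul (y 0) e"
    using lin_dec[OF y] by (simp add: smul_def fun_eq_iff)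
  also have "\<dots> = - y"
    using arg_cong[OF dec[OF y], of uminus] by (rule sym)
  finally show ?thesis .
qed

theorem infinite_classes_if_no_fixed_vector:
  assumes k: "1 \<le> k" and no_fix: "\<forall>z\<in>Zk k. lin z = z \<longrightarrow> z = 0"
  shows "infinite (reidemeister_classes G \<phi>)"
proof
  assume fin: "finite (reidemeister_classes G \<phi>)"
  have "infinite (Zk k // supp.orbit_rel)"
  proof (cases "k = 1")
    case True
    have "supp_map (supp_map x) = x" if "x \<in> Zk k" for x
      using lin_eq_uminus_if_dim_1[OF no_fix True] that lin_closed base_center(1)
      by (simp add: supp_map_def)
    then show ?thesis
      using supp.infinite_orbits_if_involution k by blast
  next
    case False
    then show ?thesis
      using supp.infinite_orbits_if_two_le_dim k by simp
  qed
  moreover have "orbit_point_class ` (Zk k // supp.orbit_rel) \<subseteq> reidemeister_classes G \<phi>"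
    using orbit_point_class_in_classes(2) by blast
  ultimately show False
    using fin finite_subset finite_imageD inj_on_orbit_point_class[OF no_fix] by metis
qed

end

theorem theorem2p3:
  fixes k :: nat
  assumes "k \<ge> 1"
  shows "R_infinity (Z2_wr_Zk k)"
  unfolding R_infinity_def
proof
  fix \<phi>
  assume "\<phi> \<in> iso (Z2_wr_Zk k) (Z2_wr_Zk k)"
  then interpret wreath_aut k \<phi>
    by unfold_locales
  show "infinite (reidemeister_classes (Z2_wr_Zk k) \<phi>)"
  proof (cases "\<exists>z\<in>Zk k. z \<noteq> 0 \<and> lin z = z")
    case True
    then show ?thesis
      using infinite_classes_if_fixed_vector by blast
  next
    case False
    then show ?thesis
      using infinite_classes_if_no_fixed_vector assms by blast
  qed
qed

end
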